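(* Let $d\in\mathbb{Z}_2^{l+r}$ and let $A\subset\mathbb{Z}_2^{l+r}$ be a subgroup. Then $d(A^\perp)=(A^d)^{\perp_d}$, where $d(A^\perp)=\{d\alpha:\alpha\in A^\perp\}$.
   Context: Products of codewords are componentwise. For $c\in\mathbb{Z}_2^{l+r}$, $|c|=|c|_l-|c|_r$, where $|c|_l,|c|_r$ are the numbers of ones in the first $l$ and last $r$ coordinates. $A^\perp=\{\beta\in\mathbb{Z}_2^{l+r}:|\beta a|\in2\mathbb{Z}\ \forall a\in A\}$. $\mathbb{Z}_2^d=\{\alpha:d\alpha=\alpha\}$, $A^d=A\cap\mathbb{Z}_2^d$, and for a subgroup $H\subset\mathbb{Z}_2^d$, $H^{\perp_d}=\{\alpha\in\mathbb{Z}_2^d:|\alpha h|\in2\mathbb{Z}\ \forall h\in H\}$. *)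

theory Defs
  imports Main
begin

text \<open>A vector c in Z_2^(l+r) is represented by its support, a subset of {0..<l+r}
  (coordinates 0..l-1 are the first l, coordinates l..l+r-1 are the last r).\<close>

definition vecs :: "nat \<Rightarrow> nat \<Rightarrow> nat set set" where
  "vecs l r = {c. c \<subseteq> {0..<l+r}}"

definition vadd :: "nat set \<Rightarrow> nat set \<Rightarrow> nat set" where
  "vadd a b = (a - b) \<union> (b - a)"

definition vmult :: "nat set \<Rightarrow> nat set \<Rightarrow> nat set" where
  "vmult a b = a \<inter> b"

definition wt :: "nat \<Rightarrow> nat \<Rightarrow> nat set \<Rightarrow> int" where
  "wt l r c = int (card (c \<inter> {0..<l})) - int (card (c \<inter> {l..<l+r}))"

definition is_subgroup :: "nat \<Rightarrow> nat \<Rightarrow> nat set set \<Rightarrow> bool" where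
  "is_subgroup l r A \<longleftrightarrow> A \<subseteq> vecs l r \<and> {} \<in> A \<and> (\<forall>a\<in>A. \<forall>b\<in>A. vadd a b \<in> A)"

definition perp :: "nat \<Rightarrow> nat \<Rightarrow> nat set set \<Rightarrow> nat set set" where
  "perp l r A = {\<beta> \<in> vecs l r. \<forall>a\<in>A. even (wt l r (vmult \<beta> a))}"

definition Zd :: "nat \<Rightarrow> nat \<Rightarrow> nat set \<Rightarrow> nat set set" where
  "Zd l r d = {\<alpha> \<in> vecs l r. vmult d \<alpha> = \<alpha>}"

definition restr :: "nat \<Rightarrow> nat \<Rightarrow> nat set set \<Rightarrow> nat set \<Rightarrow> nat set set" where
  "restr l r A d = A \<inter> Zd l r d"

definition perp_d :: "nat \<Rightarrow> nat \<Rightarrow> nat set \<Rightarrow> nat set set \<Rightarrow> nat set set" where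
  "perp_d l r d H = {\<alpha> \<in> Zd l r d. \<forall>h\<in>H. even (wt l r (vmult \<alpha> h))}"

end

theory Submission
  imports Defs
begin

text \<open>Modulo 2 the signed weight \<open>|c|_l - |c|_r\<close> agrees with the plain weight \<open>|c|\<close>, so both
  orthogonality notions are the ordinary binary ones and \<open>d(A\<^sup>\<perp>) \<subseteq> (A\<^sup>d)\<^sup>\<perp>\<^sup>d\<close> is immediate.
  Conversely, a vector \<open>x\<close> supported on \<open>d\<close> and orthogonal to \<open>A\<^sup>d\<close> is extended to a vector of
  \<open>A\<^sup>\<perp>\<close> one coordinate \<open>i \<notin> d\<close> at a time: if \<open>x\<close> is not yet orthogonal to the elements of \<open>A\<close>
  supported on \<open>d \<union> {i}\<close>, switching on coordinate \<open>i\<close> repairs this, because any two such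
  elements containing \<open>i\<close> differ by an element of \<open>A\<close> supported on \<open>d\<close>.\<close>

definition orth :: "nat set \<Rightarrow> nat set set \<Rightarrow> bool" where
  "orth x H \<longleftrightarrow> (\<forall>h\<in>H. even (card (x \<inter> h)))"

lemma even_wt_iff_even_card:
  assumes "c \<subseteq> {0..<l+r}"
  shows "even (wt l r c) \<longleftrightarrow> even (card c)"
proof -
  have "c = (c \<inter> {0..<l}) \<union> (c \<inter> {l..<l+r})" using assms by auto
  also have "card \<dots> = card (c \<inter> {0..<l}) + card (c \<inter> {l..<l+r})"
    by (rule card_Un_disjoint) auto
  finally have "card c = card (c \<inter> {0..<l}) + card (c \<inter> {l..<l+r})" .
  then show ?thesis unfolding wt_def by presburger
qed

lemma even_card_vadd_iff:
  assumes "finite a" "finite b"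
  shows "even (card (vadd a b)) \<longleftrightarrow> (even (card a) \<longleftrightarrow> even (card b))"
proof -
  have "card (vadd a b) = card (a - b) + card (b - a)"
    unfolding vadd_def using assms by (intro card_Un_disjoint) auto
  moreover have "card a = card (a \<inter> b) + card (a - b)" "card b = card (b \<inter> a) + card (b - a)"
    using assms by (simp_all only: card_Int_Diff)
  moreover have "b \<inter> a = a \<inter> b" by blast
  ultimately show ?thesis by presburger
qed

lemma perp_eq_orth: "perp l r A = {\<beta> \<in> vecs l r. orth \<beta> A}"
proof -
  have "even (wt l r (\<beta> \<inter> a)) \<longleftrightarrow> even (card (\<beta> \<inter> a))" if "\<beta> \<in> vecs l r" for \<beta> a
    using that unfolding vecs_def by (intro even_wt_iff_even_card) auto
  then show ?thesis unfolding perp_def orth_def vmult_def by auto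
qed

lemma perp_d_restr_eq_orth:
  assumes "d \<in> vecs l r" "A \<subseteq> vecs l r"
  shows "perp_d l r d (restr l r A d) = {x. x \<subseteq> d \<and> orth x {h \<in> A. h \<subseteq> d}}"
proof -
  have Zd: "Zd l r d = {x. x \<subseteq> d}"
    using assms(1) unfolding Zd_def vecs_def vmult_def by auto
  have "restr l r A d = {h \<in> A. h \<subseteq> d}"
    unfolding restr_def Zd by auto
  moreover have "even (wt l r (x \<inter> h)) \<longleftrightarrow> even (card (x \<inter> h))" if "x \<subseteq> d" for x h
  proof -
    have "x \<inter> h \<subseteq> {0..<l+r}" using that assms(1) unfolding vecs_def by auto
    then show ?thesis by (rule even_wt_iff_even_card)
  qed
  ultimately show ?thesis
    unfolding perp_d_def Zd orth_def vmult_def by auto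
qed

lemma orth_extend_by_one:
  assumes closed: "\<forall>a\<in>A. \<forall>b\<in>A. vadd a b \<in> A"
    and "finite x" "x \<subseteq> D" "i \<notin> D"
    and orth_x: "orth x {h \<in> A. h \<subseteq> D}"
  obtains x' where "x' = x \<or> x' = insert i x" "orth x' {h \<in> A. h \<subseteq> insert i D}"
proof (cases "orth x {h \<in> A. h \<subseteq> insert i D}")
  case True
  then show ?thesis using that by blast
next
  case False
  then obtain a where a: "a \<in> A" "a \<subseteq> insert i D" "odd (card (x \<inter> a))"
    unfolding orth_def by auto
  have "i \<in> a" using a orth_x unfolding orth_def by auto
  have "i \<notin> x" using assms(3,4) by auto
  have "even (card (insert i x \<inter> b))" if b: "b \<in> A" "b \<subseteq> insert i D" for b
  proof (cases "i \<in> b")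
    case True
    have "vadd a b \<in> A" "vadd a b \<subseteq> D"
      using closed a b \<open>i \<in> a\<close> True unfolding vadd_def by auto
    moreover have "x \<inter> vadd a b = vadd (x \<inter> a) (x \<inter> b)" unfolding vadd_def by auto
    ultimately have "even (card (vadd (x \<inter> a) (x \<inter> b)))"
      using orth_x unfolding orth_def by auto
    then have "odd (card (x \<inter> b))"
      using a(3) even_card_vadd_iff \<open>finite x\<close> by auto
    moreover have "insert i x \<inter> b = insert i (x \<inter> b)" using True by auto
    ultimately show ?thesis using \<open>i \<notin> x\<close> \<open>finite x\<close> by simp
  next
    case False
    then show ?thesis using b orth_x unfolding orth_def by auto
  qed
  then show ?thesis using that unfolding orth_def by blast
qed

lemma orth_extension:
  assumes "finite U" "\<forall>a\<in>A. a \<subseteq> U" "\<forall>a\<in>A. \<forall>b\<in>A. vadd a b \<in> A"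
    and "D \<subseteq> U" "x \<subseteq> D" "orth x {h \<in> A. h \<subseteq> D}"
  shows "\<exists>\<beta>. \<beta> \<subseteq> U \<and> orth \<beta> A \<and> D \<inter> \<beta> = x"
  using assms(4-)
proof (induction "card (U - D)" arbitrary: D x rule: less_induct)
  case less
  show ?case
  proof (cases "D = U")
    case True
    have "orth x A" using less.prems(3) assms(2) True unfolding orth_def by auto
    then show ?thesis using less.prems(1,2) True by blast
  next
    case False
    then obtain i where i: "i \<in> U" "i \<notin> D" using less.prems(1) by blast
    have "finite x" using less.prems(1,2) assms(1) by (meson finite_subset order_trans)
    then obtain x' where x': "x' = x \<or> x' = insert i x" "orth x' {h \<in> A. h \<subseteq> insert i D}"
      by (rule orth_extend_by_one[OF assms(3) _ less.prems(2) i(2) less.prems(3)])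
    have "U - insert i D \<subset> U - D" using i by auto
    then have "card (U - insert i D) < card (U - D)"
      using assms(1) by (simp add: psubset_card_mono)
    moreover have "insert i D \<subseteq> U" "x' \<subseteq> insert i D"
      using i less.prems(1,2) x'(1) by auto
    ultimately have "\<exists>\<beta>. \<beta> \<subseteq> U \<and> orth \<beta> A \<and> insert i D \<inter> \<beta> = x'"
      using x'(2) by (rule less.hyps)
    then obtain \<beta> where "\<beta> \<subseteq> U" "orth \<beta> A" "insert i D \<inter> \<beta> = x'" by blast
    moreover have "D \<inter> \<beta> = x" using calculation(3) x'(1) less.prems(2) i(2) by auto
    ultimately show ?thesis by blast
  qed
qed

lemma Int_image_orth_eq:
  assumes "finite U" "\<forall>a\<in>A. a \<subseteq> U" "\<forall>a\<in>A. \<forall>b\<in>A. vadd a b \<in> A" "D \<subseteq> U"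
  shows "(\<inter>) D ` {\<beta>. \<beta> \<subseteq> U \<and> orth \<beta> A} = {x. x \<subseteq> D \<and> orth x {h \<in> A. h \<subseteq> D}}"
proof (intro equalityI subsetI)
  fix x assume "x \<in> (\<inter>) D ` {\<beta>. \<beta> \<subseteq> U \<and> orth \<beta> A}"
  then obtain \<beta> where "orth \<beta> A" "x = D \<inter> \<beta>" by auto
  moreover have "x \<inter> h = \<beta> \<inter> h" if "h \<subseteq> D" for h using that calculation(2) by auto
  ultimately show "x \<in> {x. x \<subseteq> D \<and> orth x {h \<in> A. h \<subseteq> D}}" unfolding orth_def by auto
next
  fix x assume "x \<in> {x. x \<subseteq> D \<and> orth x {h \<in> A. h \<subseteq> D}}"
  then obtain \<beta> where "\<beta> \<subseteq> U" "orth \<beta> A" "D \<inter> \<beta> = x"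
    using orth_extension[OF assms] by auto
  then show "x \<in> (\<inter>) D ` {\<beta>. \<beta> \<subseteq> U \<and> orth \<beta> A}" by auto
qed

theorem mainTheorem13:
  fixes l r :: nat and d :: "nat set" and A :: "nat set set"
  assumes "d \<in> vecs l r"
    and "is_subgroup l r A"
  shows "(\<lambda>\<alpha>. vmult d \<alpha>) ` perp l r A = perp_d l r d (restr l r A d)"
proof -
  have A: "A \<subseteq> vecs l r" "\<forall>a\<in>A. \<forall>b\<in>A. vadd a b \<in> A"
    using assms(2) unfolding is_subgroup_def by auto
  have "(\<inter>) d ` {\<beta>. \<beta> \<subseteq> {0..<l+r} \<and> orth \<beta> A} = {x. x \<subseteq> d \<and> orth x {h \<in> A. h \<subseteq> d}}"
    using A assms(1) by (intro Int_image_orth_eq) (auto simp: vecs_def)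
  then show ?thesis
    unfolding perp_eq_orth perp_d_restr_eq_orth[OF assms(1) A(1)] vmult_def vecs_def by simp
qed

end
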